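(* Consider the following setting. Let $P\subseteq\mathbb{R}^n$ be a closed convex set, $c:\mathbb{R}^n\to\mathbb{R}$, $A\in\mathbb{R}^{I\times n}$ with rows $A_{i\bullet}$, $\eta\in\mathbb{R}^I$, scalars $\psi_{ij}$ ($i=0,\dots,I$, $j=1,\dots,J_i$) with $\psi_{ij}^\pm=\max(\pm\psi_{ij},0)$, and for each $(i,j)$ $$\phi_{ij}(x) = \max_{1\le k\le K_{ij}}\big[(a_{ij}^k)^\top x + \alpha_{ij}^k\big] + \min_{1\le \ell\le L_{ij}}\big[(b_{ij}^\ell)^\top x + \beta_{ij}^\ell\big].$$ Define $\theta$, $X_{\rm AHS}$, $\theta^\varepsilon$, $X^\varepsilon_{\rm AHS}$ as in the context. Let $\bar x\in X_{\rm AHS}$, and let $\bar\varepsilon>0$ and a neighborhood $\mathcal{N}$ of $\bar x$ be such that for all $i=0,1,\dots,I$, all $j\notin \mathcal{J}^-_{i,0}(\bar x)$, all $\varepsilon\in(0,\bar\varepsilon]$ and all $x\in\mathcal{N}$, $$\psi_{ij}^-\,\mathbf{1}_{(-\varepsilon,\infty)}(\phi_{ij}(x)) = \psi_{ij}^-\,\mathbf{1}_{[0,\infty)}(\phi_{ij}(x)) = \psi_{ij}^-\,\mathbf{1}_{[0,\infty)}(\phi_{ij}(\bar x)).$$ Then: (A) If $\bar x$ is a local maximizer of $\theta$ on $X_{\rm AHS}$, then $\bar x$ is a local maximizer of $\theta^\varepsilon$ on $X^\varepsilon_{\rm AHS}$ for every $\varepsilon\in(0,\bar\varepsilon]$. (B)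 Conversely, if for some $\varepsilon\in(0,\bar\varepsilon]$ the point $\bar x$ is a local maximizer of $\theta^\varepsilon$ on $X^\varepsilon_{\rm AHS}$ and $\bar x$ satisfies the local sign-invariance condition, then $\bar x$ is a local maximizer of $\theta$ on $X_{\rm AHS}$.
   Context: $\mathbf{1}_S$ is the indicator of $S\subseteq\mathbb{R}$. $\theta(x)=c(x)+\sum_{j=1}^{J_0}\psi_{0j}\mathbf{1}_{[0,\infty)}(\phi_{0j}(x))$ and $X_{\rm AHS}=\{x\in P: A_{i\bullet}x+\sum_{j=1}^{J_i}\psi_{ij}\mathbf{1}_{[0,\infty)}(\phi_{ij}(x))\ge\eta_i,\ i=1,\dots,I\}$ (the problem of maximizing $\theta$ over $X_{\rm AHS}$ is the A-HSCOP). For $\varepsilon>0$: $\theta^\varepsilon(x)=c(x)+\sum_{j=1}^{J_0}\psi_{0j}^+\mathbf{1}_{[0,\infty)}(\phi_{0j}(x))-\sum_{j=1}^{J_0}\psi_{0j}^-\mathbf{1}_{(-\varepsilon,\infty)}(\phi_{0j}(x))$ and $X^\varepsilon_{\rm AHS}=\{x\in P: A_{i\bullet}x+\sum_{j}\psi_{ij}^+\mathbf{1}_{[0,\infty)}(\phi_{ij}(x))-\sum_j\psi_{ij}^-\mathbf{1}_{(-\varepsilon,\infty)}(\phi_{ij}(x))\ge\eta_i,\ i=1,\dots,I\}$. A local maximizer of a function $f$ on a set $X$ is a point $\bar x\in X$ for which there is a neighborhood $\mathcal{N}$ of $\bar x$ with $f(\bar x)\ge f(x)$ for all $x\in X\cap\mathcal{N}$.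 For $i=0,\dots,I$, $\mathcal{J}^-_{i,0}(\bar x)=\{j\in\{1,\dots,J_i\}:\psi_{ij}<0,\ \phi_{ij}(\bar x)=0\}$. The point $\bar x$ satisfies the local sign-invariance (LSI) condition if for every $i=0,1,\dots,I$ and every $j\in\mathcal{J}^-_{i,0}(\bar x)$, $\phi_{ij}$ is nonnegative on some neighborhood of $\bar x$. *)

theory Defs
  imports "HOL-Analysis.Analysis"
begin

definition pospart :: "real \<Rightarrow> real" where "pospart t = max t 0"
definition negpart :: "real \<Rightarrow> real" where "negpart t = max (- t) 0"

definition pwl_phi ::
  "(nat \<Rightarrow> nat \<Rightarrow> nat \<Rightarrow> real^'n) \<Rightarrow> (nat \<Rightarrow> nat \<Rightarrow> nat \<Rightarrow> real) \<Rightarrow> (nat \<Rightarrow> nat \<Rightarrow> nat) \<Rightarrow>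
   (nat \<Rightarrow> nat \<Rightarrow> nat \<Rightarrow> real^'n) \<Rightarrow> (nat \<Rightarrow> nat \<Rightarrow> nat \<Rightarrow> real) \<Rightarrow> (nat \<Rightarrow> nat \<Rightarrow> nat) \<Rightarrow>
   nat \<Rightarrow> nat \<Rightarrow> real^'n \<Rightarrow> real" where
  "pwl_phi a alpha K b beta L i j x =
     Max ((\<lambda>k. a i j k \<bullet> x + alpha i j k) ` {1..K i j})
   + Min ((\<lambda>l. b i j l \<bullet> x + beta i j l) ` {1..L i j})"

definition theta ::
  "(real^'n \<Rightarrow> real) \<Rightarrow> (nat \<Rightarrow> nat \<Rightarrow> real) \<Rightarrow> (nat \<Rightarrow> nat) \<Rightarrow> (nat \<Rightarrow> nat \<Rightarrow> real^'n \<Rightarrow> real)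
   \<Rightarrow> real^'n \<Rightarrow> real" where
  "theta c psi J ph x = c x + (\<Sum>j = 1..J 0. psi 0 j * indicator {0..} (ph 0 j x))"

definition X_AHS ::
  "(real^'n) set \<Rightarrow> (nat \<Rightarrow> real^'n) \<Rightarrow> (nat \<Rightarrow> real) \<Rightarrow> nat \<Rightarrow> (nat \<Rightarrow> nat \<Rightarrow> real) \<Rightarrow> (nat \<Rightarrow> nat)
   \<Rightarrow> (nat \<Rightarrow> nat \<Rightarrow> real^'n \<Rightarrow> real) \<Rightarrow> (real^'n) set" where
  "X_AHS P A eta I psi J ph =
     {x \<in> P. \<forall>i \<in> {1..I}.
        A i \<bullet> x + (\<Sum>j = 1..J i. psi i j * indicator {0..} (ph i j x)) \<ge> eta i}"

definition theta_eps ::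
  "real \<Rightarrow> (real^'n \<Rightarrow> real) \<Rightarrow> (nat \<Rightarrow> nat \<Rightarrow> real) \<Rightarrow> (nat \<Rightarrow> nat) \<Rightarrow> (nat \<Rightarrow> nat \<Rightarrow> real^'n \<Rightarrow> real)
   \<Rightarrow> real^'n \<Rightarrow> real" where
  "theta_eps eps c psi J ph x = c x
     + (\<Sum>j = 1..J 0. pospart (psi 0 j) * indicator {0..} (ph 0 j x))
     - (\<Sum>j = 1..J 0. negpart (psi 0 j) * indicator {-eps<..} (ph 0 j x))"

definition X_AHS_eps ::
  "real \<Rightarrow> (real^'n) set \<Rightarrow> (nat \<Rightarrow> real^'n) \<Rightarrow> (nat \<Rightarrow> real) \<Rightarrow> nat \<Rightarrow> (nat \<Rightarrow> nat \<Rightarrow> real)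
   \<Rightarrow> (nat \<Rightarrow> nat) \<Rightarrow> (nat \<Rightarrow> nat \<Rightarrow> real^'n \<Rightarrow> real) \<Rightarrow> (real^'n) set" where
  "X_AHS_eps eps P A eta I psi J ph =
     {x \<in> P. \<forall>i \<in> {1..I}.
        A i \<bullet> x + (\<Sum>j = 1..J i. pospart (psi i j) * indicator {0..} (ph i j x))
                 - (\<Sum>j = 1..J i. negpart (psi i j) * indicator {-eps<..} (ph i j x)) \<ge> eta i}"

definition local_maximizer :: "('a::topological_space \<Rightarrow> real) \<Rightarrow> 'a set \<Rightarrow> 'a \<Rightarrow> bool" where
  "local_maximizer f X xb \<longleftrightarrow> xb \<in> X \<and> (\<exists>N. open N \<and> xb \<in> N \<and> (\<forall>x \<in> X \<inter> N. f xb \<ge> f x))"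

definition Jminus0 ::
  "(nat \<Rightarrow> nat \<Rightarrow> real) \<Rightarrow> (nat \<Rightarrow> nat) \<Rightarrow> (nat \<Rightarrow> nat \<Rightarrow> 'a \<Rightarrow> real) \<Rightarrow> nat \<Rightarrow> 'a \<Rightarrow> nat set" where
  "Jminus0 psi J ph i xb = {j \<in> {1..J i}. psi i j < 0 \<and> ph i j xb = 0}"

definition LSI ::
  "nat \<Rightarrow> (nat \<Rightarrow> nat \<Rightarrow> real) \<Rightarrow> (nat \<Rightarrow> nat) \<Rightarrow> (nat \<Rightarrow> nat \<Rightarrow> 'a::topological_space \<Rightarrow> real) \<Rightarrow> 'a \<Rightarrow> bool" where
  "LSI I psi J ph xb \<longleftrightarrow>
     (\<forall>i \<in> {0..I}. \<forall>j \<in> Jminus0 psi J ph i xb.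
        \<exists>N. open N \<and> xb \<in> N \<and> (\<forall>x \<in> N. ph i j x \<ge> 0))"

end

theory Submission
  imports Defs
begin

text \<open>Writing \<open>\<psi> = \<psi>\<^sup>+ - \<psi>\<^sup>-\<close> and enlarging \<open>[0,\<infinity>)\<close> to \<open>(-\<epsilon>,\<infinity>)\<close> only in the \<open>\<psi>\<^sup>-\<close>
  terms can only lower \<open>\<theta>\<close> and the constraint functions, so \<open>\<theta>\<^sup>\<epsilon> \<le> \<theta>\<close> and \<open>X\<^sup>\<epsilon> \<subseteq> X\<close>, with
  equality at every point where the two indicators agree in every \<open>\<psi>\<^sup>-\<close> term. By hypothesis they
  agree on \<open>\<N>\<close> for the indices outside \<open>\<J>\<^sup>-\<^sub>i\<^sub>,\<^sub>0(xb)\<close>; for the indices inside they agree at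
  \<open>xb\<close> itself, where \<open>\<phi>\<^sub>i\<^sub>j = 0\<close>, and under local sign invariance on a whole neighbourhood of
  \<open>xb\<close>, where \<open>\<phi>\<^sub>i\<^sub>j \<ge> 0\<close>. Agreement at \<open>xb\<close> transfers local maximality from \<open>(\<theta>, X)\<close> to the
  smaller problem \<open>(\<theta>\<^sup>\<epsilon>, X\<^sup>\<epsilon>)\<close>; agreement near \<open>xb\<close> transfers it back.\<close>

definition eps_indicators_agree ::
  "real \<Rightarrow> nat \<Rightarrow> (nat \<Rightarrow> nat \<Rightarrow> real) \<Rightarrow> (nat \<Rightarrow> nat) \<Rightarrow> (nat \<Rightarrow> nat \<Rightarrow> 'a \<Rightarrow> real) \<Rightarrow> 'a \<Rightarrow> bool"
  where
  "eps_indicators_agree eps I psi J ph x \<longleftrightarrow>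
     (\<forall>i \<in> {0..I}. \<forall>j \<in> {1..J i}.
        negpart (psi i j) * indicator {-eps<..} (ph i j x) = negpart (psi i j) * indicator {0..} (ph i j x))"

lemma pospart_minus_negpart_indicator_le:
  fixes t :: real
  assumes "eps > 0"
  shows "pospart p * indicator {0..} t - negpart p * indicator {-eps<..} t \<le> p * indicator {0..} t"
  using assms by (auto simp: pospart_def negpart_def indicator_def)

lemma sum_pospart_minus_negpart_indicator_le:
  fixes f :: "'b \<Rightarrow> real"
  assumes "eps > 0"
  shows "(\<Sum>j\<in>S. pospart (psi j) * indicator {0..} (f j))
           - (\<Sum>j\<in>S. negpart (psi j) * indicator {-eps<..} (f j))
         \<le> (\<Sum>j\<in>S. psi j * indicator {0..} (f j))"
  unfolding sum_subtractf[symmetric]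
  by (intro sum_mono pospart_minus_negpart_indicator_le assms)

lemma sum_pospart_minus_negpart_indicator_eq:
  fixes f :: "'b \<Rightarrow> real"
  assumes "\<forall>j\<in>S. negpart (psi j) * indicator {-eps<..} (f j) = negpart (psi j) * indicator {0..} (f j)"
  shows "(\<Sum>j\<in>S. pospart (psi j) * indicator {0..} (f j))
           - (\<Sum>j\<in>S. negpart (psi j) * indicator {-eps<..} (f j))
         = (\<Sum>j\<in>S. psi j * indicator {0..} (f j))"
  unfolding sum_subtractf[symmetric] using assms
  by (intro sum.cong) (auto simp: pospart_def negpart_def indicator_def)

lemma theta_eps_le_theta:
  assumes "eps > 0"
  shows "theta_eps eps c psi J ph x \<le> theta c psi J ph x"
  using sum_pospart_minus_negpart_indicator_le[where S="{1..J 0}" and psi="psi 0" and f="\<lambda>j. ph 0 j x", OF assms]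
  unfolding theta_eps_def theta_def by linarith

lemma X_AHS_eps_subset_X_AHS:
  assumes "eps > 0"
  shows "X_AHS_eps eps P A eta I psi J ph \<subseteq> X_AHS P A eta I psi J ph"
proof
  fix x assume x: "x \<in> X_AHS_eps eps P A eta I psi J ph"
  have "eta i \<le> A i \<bullet> x + (\<Sum>j = 1..J i. psi i j * indicator {0..} (ph i j x))" if "i \<in> {1..I}" for i
    using x that assms
      sum_pospart_minus_negpart_indicator_le[where S="{1..J i}" and psi="psi i" and f="\<lambda>j. ph i j x"]
    unfolding X_AHS_eps_def by force
  then show "x \<in> X_AHS P A eta I psi J ph"
    using x unfolding X_AHS_eps_def X_AHS_def by blast
qed

lemma theta_eps_eq_theta:
  "eps_indicators_agree eps I psi J ph x \<Longrightarrow> theta_eps eps c psi J ph x = theta c psi J ph x"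
  using sum_pospart_minus_negpart_indicator_eq[where S="{1..J 0}" and psi="psi 0" and f="\<lambda>j. ph 0 j x"]
  unfolding eps_indicators_agree_def theta_eps_def theta_def by auto

lemma X_AHS_eps_iff_X_AHS:
  assumes "eps_indicators_agree eps I psi J ph x"
  shows "x \<in> X_AHS_eps eps P A eta I psi J ph \<longleftrightarrow> x \<in> X_AHS P A eta I psi J ph"
proof -
  have "A i \<bullet> x + (\<Sum>j = 1..J i. pospart (psi i j) * indicator {0..} (ph i j x))
          - (\<Sum>j = 1..J i. negpart (psi i j) * indicator {-eps<..} (ph i j x))
        = A i \<bullet> x + (\<Sum>j = 1..J i. psi i j * indicator {0..} (ph i j x))" if "i \<in> {1..I}" for i
    using that assms
      sum_pospart_minus_negpart_indicator_eq[where S="{1..J i}" and psi="psi i" and f="\<lambda>j. ph i j x"]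
    unfolding eps_indicators_agree_def by (simp add: add_diff_eq[symmetric])
  then show ?thesis
    unfolding X_AHS_eps_def X_AHS_def mem_Collect_eq by (simp only: cong: ball_cong)
qed

lemma eps_indicators_agreeI:
  assumes "eps > 0"
    and outside: "\<forall>i \<in> {0..I}. \<forall>j \<in> {1..J i} - Jminus0 psi J ph i xb.
                    negpart (psi i j) * indicator {-eps<..} (ph i j x)
                      = negpart (psi i j) * indicator {0..} (ph i j x)"
    and inside: "\<forall>i \<in> {0..I}. \<forall>j \<in> Jminus0 psi J ph i xb. ph i j x \<ge> 0"
  shows "eps_indicators_agree eps I psi J ph x"
  unfolding eps_indicators_agree_def
proof (intro ballI)
  fix i j assume i: "i \<in> {0..I}" and j: "j \<in> {1..J i}"
  show "negpart (psi i j) * indicator {-eps<..} (ph i j x) = negpart (psi i j) * indicator {0..} (ph i j x)"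
  proof (cases "j \<in> Jminus0 psi J ph i xb")
    case True
    then have "ph i j x \<ge> 0" using inside i by blast
    then show ?thesis using \<open>eps > 0\<close> by (simp add: indicator_def)
  next
    case False
    then show ?thesis using outside i j by blast
  qed
qed

lemma LSI_imp_nonneg_near:
  fixes ph :: "nat \<Rightarrow> nat \<Rightarrow> 'a::topological_space \<Rightarrow> real"
  assumes "LSI I psi J ph xb"
  obtains M where "open M" "xb \<in> M" "\<forall>x \<in> M. \<forall>i \<in> {0..I}. \<forall>j \<in> Jminus0 psi J ph i xb. ph i j x \<ge> 0"
proof -
  define S where "S = Sigma {0..I} (\<lambda>i. Jminus0 psi J ph i xb)"
  have "finite S" unfolding S_def Jminus0_def by auto
  have "\<forall>ij \<in> S. \<exists>U. open U \<and> xb \<in> U \<and> (\<forall>x \<in> U. ph (fst ij) (snd ij) x \<ge> 0)"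
    using assms unfolding LSI_def S_def by auto
  then obtain U where U: "\<And>ij. ij \<in> S \<Longrightarrow> open (U ij) \<and> xb \<in> U ij \<and> (\<forall>x \<in> U ij. ph (fst ij) (snd ij) x \<ge> 0)"
    by metis
  show ?thesis
  proof
    show "open (\<Inter>ij\<in>S. U ij)" using \<open>finite S\<close> U by (intro open_INT) auto
    show "xb \<in> (\<Inter>ij\<in>S. U ij)" using U by blast
    show "\<forall>x \<in> (\<Inter>ij\<in>S. U ij). \<forall>i \<in> {0..I}. \<forall>j \<in> Jminus0 psi J ph i xb. ph i j x \<ge> 0"
      using U unfolding S_def by fastforce
  qed
qed

lemma local_maximizer_minorant_subset:
  assumes "local_maximizer f X xb" "xb \<in> Y" "Y \<subseteq> X" "\<And>x. g x \<le> f x" "g xb = f xb"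
  shows "local_maximizer g Y xb"
proof -
  obtain U where "open U" "xb \<in> U" "\<forall>x \<in> X \<inter> U. f x \<le> f xb"
    using assms(1) unfolding local_maximizer_def by blast
  then show ?thesis
    using assms(2-5) unfolding local_maximizer_def by (metis IntD1 IntD2 IntI order_trans subsetD)
qed

lemma local_maximizer_cong_near:
  assumes "local_maximizer g Y xb" "open M" "xb \<in> M"
    and "\<And>x. x \<in> M \<Longrightarrow> f x = g x" "\<And>x. x \<in> M \<Longrightarrow> x \<in> X \<longleftrightarrow> x \<in> Y"
  shows "local_maximizer f X xb"
proof -
  obtain U where "open U" "xb \<in> U" "\<forall>x \<in> Y \<inter> U. g x \<le> g xb"
    using assms(1) unfolding local_maximizer_def by blast
  then have "open (U \<inter> M)" "xb \<in> U \<inter> M" "\<forall>x \<in> X \<inter> (U \<inter> M). f x \<le> f xb"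
    using assms(2-5) by auto
  then show ?thesis
    using assms(1,3,5) unfolding local_maximizer_def by blast
qed

lemma local_maximizer_theta_eps_if_agree_at:
  assumes "local_maximizer (theta c psi J ph) (X_AHS P A eta I psi J ph) xb"
    and "eps > 0" and "eps_indicators_agree eps I psi J ph xb"
  shows "local_maximizer (theta_eps eps c psi J ph) (X_AHS_eps eps P A eta I psi J ph) xb"
proof (rule local_maximizer_minorant_subset[OF assms(1)])
  show "xb \<in> X_AHS_eps eps P A eta I psi J ph"
    using assms(1,3) by (simp add: X_AHS_eps_iff_X_AHS local_maximizer_def)
qed (use assms(2,3) in \<open>simp_all add: theta_eps_le_theta X_AHS_eps_subset_X_AHS theta_eps_eq_theta\<close>)

lemma local_maximizer_theta_if_agree_near:
  assumes "local_maximizer (theta_eps eps c psi J ph) (X_AHS_eps eps P A eta I psi J ph) xb"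
    and "open M" "xb \<in> M" "\<forall>x \<in> M. eps_indicators_agree eps I psi J ph x"
  shows "local_maximizer (theta c psi J ph) (X_AHS P A eta I psi J ph) xb"
proof (rule local_maximizer_cong_near[OF assms(1-3)])
  fix x assume "x \<in> M"
  then have "eps_indicators_agree eps I psi J ph x" using assms(4) by blast
  then show "theta c psi J ph x = theta_eps eps c psi J ph x"
    and "x \<in> X_AHS P A eta I psi J ph \<longleftrightarrow> x \<in> X_AHS_eps eps P A eta I psi J ph"
    by (simp_all add: theta_eps_eq_theta X_AHS_eps_iff_X_AHS)
qed

theorem proposition3:
  fixes P :: "(real^'n::finite) set" and c :: "real^'n \<Rightarrow> real"
    and I :: nat and A :: "nat \<Rightarrow> real^'n" and eta :: "nat \<Rightarrow> real"
    and J :: "nat \<Rightarrow> nat" and psi :: "nat \<Rightarrow> nat \<Rightarrow> real"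
    and K L :: "nat \<Rightarrow> nat \<Rightarrow> nat"
    and a b :: "nat \<Rightarrow> nat \<Rightarrow> nat \<Rightarrow> real^'n" and alpha beta :: "nat \<Rightarrow> nat \<Rightarrow> nat \<Rightarrow> real"
    and xb :: "real^'n" and epsb :: real and N :: "(real^'n) set"
  assumes P: "closed P" "convex P"
    and KL: "\<forall>i \<in> {0..I}. \<forall>j \<in> {1..J i}. K i j \<ge> 1 \<and> L i j \<ge> 1"
    and xb: "xb \<in> X_AHS P A eta I psi J (pwl_phi a alpha K b beta L)"
    and epsb: "epsb > 0"
    and N: "open N" "xb \<in> N"
    and H: "\<forall>i \<in> {0..I}. \<forall>j \<in> {1..J i} - Jminus0 psi J (pwl_phi a alpha K b beta L) i xb.
              \<forall>eps \<in> {0<..epsb}. \<forall>x \<in> N.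
                negpart (psi i j) * indicator {-eps<..} (pwl_phi a alpha K b beta L i j x)
                  = negpart (psi i j) * indicator {0..} (pwl_phi a alpha K b beta L i j x)
              \<and> negpart (psi i j) * indicator {0..} (pwl_phi a alpha K b beta L i j x)
                  = negpart (psi i j) * indicator {0..} (pwl_phi a alpha K b beta L i j xb)"
  shows "(local_maximizer (theta c psi J (pwl_phi a alpha K b beta L))
             (X_AHS P A eta I psi J (pwl_phi a alpha K b beta L)) xb
          \<longrightarrow> (\<forall>eps \<in> {0<..epsb}.
                local_maximizer (theta_eps eps c psi J (pwl_phi a alpha K b beta L))
                  (X_AHS_eps eps P A eta I psi J (pwl_phi a alpha K b beta L)) xb))
       \<and> (\<forall>eps \<in> {0<..epsb}.
            local_maximizer (theta_eps eps c psi J (pwl_phi a alpha K b beta L))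
              (X_AHS_eps eps P A eta I psi J (pwl_phi a alpha K b beta L)) xb
            \<and> LSI I psi J (pwl_phi a alpha K b beta L) xb
            \<longrightarrow> local_maximizer (theta c psi J (pwl_phi a alpha K b beta L))
                  (X_AHS P A eta I psi J (pwl_phi a alpha K b beta L)) xb)"
proof -
  let ?ph = "pwl_phi a alpha K b beta L"
  have agree: "eps_indicators_agree eps I psi J ?ph x"
    if eps: "eps \<in> {0<..epsb}" and "x \<in> N"
      and nonneg: "\<forall>i \<in> {0..I}. \<forall>j \<in> Jminus0 psi J ?ph i xb. ?ph i j x \<ge> 0" for eps x
  proof (rule eps_indicators_agreeI[OF _ _ nonneg])
    show "eps > 0" using eps by simp
  qed (use H eps \<open>x \<in> N\<close> in blast)
  show ?thesis
  proof (intro conjI impI ballI)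
    fix eps assume "local_maximizer (theta c psi J ?ph) (X_AHS P A eta I psi J ?ph) xb"
      and eps: "eps \<in> {0<..epsb}"
    moreover have "eps_indicators_agree eps I psi J ?ph xb"
      using agree[OF eps N(2)] by (simp add: Jminus0_def)
    ultimately show "local_maximizer (theta_eps eps c psi J ?ph) (X_AHS_eps eps P A eta I psi J ?ph) xb"
      by (intro local_maximizer_theta_eps_if_agree_at) auto
  next
    fix eps assume eps: "eps \<in> {0<..epsb}"
      and lm_lsi: "local_maximizer (theta_eps eps c psi J ?ph) (X_AHS_eps eps P A eta I psi J ?ph) xb
           \<and> LSI I psi J ?ph xb"
    obtain M where "open M" "xb \<in> M"
      and nonneg: "\<forall>x \<in> M. \<forall>i \<in> {0..I}. \<forall>j \<in> Jminus0 psi J ?ph i xb. ?ph i j x \<ge> 0"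
      by (rule LSI_imp_nonneg_near[OF lm_lsi[THEN conjunct2]])
    have "eps_indicators_agree eps I psi J ?ph x" if "x \<in> M \<inter> N" for x
      using that nonneg by (intro agree[OF eps]) auto
    then show "local_maximizer (theta c psi J ?ph) (X_AHS P A eta I psi J ?ph) xb"
      by (intro local_maximizer_theta_if_agree_near[where M="M \<inter> N", OF lm_lsi[THEN conjunct1]])
        (use \<open>open M\<close> \<open>xb \<in> M\<close> N in auto)
  qed
qed

end
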